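(* Let $n\ge2$ and let $\widetilde{\mathcal T}_n=\mathcal T_n\times\mathbb Z/n\mathbb Z$ with the maps $\sigma_1,\dots,\sigma_{n-1}$ defined in the context. With $\delta_n=\sigma_1\sigma_2\cdots\sigma_{n-1}$ (apply $\sigma_{n-1}$ first), applying $\delta_n$ $n$ times gives $\delta_n^n(T,\varepsilon)=(T,\varepsilon-1)$ for all $(T,\varepsilon)\in\widetilde{\mathcal T}_n$. Consequently the Garside element squared, $\Delta^2=\delta_n^n$ where $\Delta=\delta_n\delta_{n-1}\cdots\delta_2$ and $\delta_m=\sigma_1\cdots\sigma_{m-1}$, acts as the identity on $\mathcal T_n$, and $\Delta^{2n}$ acts as the identity on $\widetilde{\mathcal T}_n$.
   Context: $\mathcal T_n$ is the set of rooted trees with vertices labeled $1,\dots,n$; $v_i$ is the vertex labeled $i$. Maps $\sigma_i$ on $\mathcal T_n$: if $v_{i+1}$ is the root of $T$, $\sigma_iT$ is $T$ with labels $i,i+1$ interchanged. Otherwise form $T_+$ by adding a vertex $v_0$ as parent of the root, write $a\to b$ for "$a$ is the parent of $b$", and: (0) if neither of $v_i,v_{i+1}$ is the parent of the other and they have different parents, interchange labels $i,i+1$; (1) if $v_k\to v_i\to v_{i+1}$, make $v_k\to v_{i+1}\to v_i$, other relations unchanged; (2) if $v_k\to v_{i+1}\to v_i$, make $v_i,v_{i+1}$ both children of $v_k$ and interchange their sets of other children; (3) if $v_i,v_{i+1}$ share parent $v_k$, interchange their sets of children and then make $v_{i+1}$ a child of $v_i$; then delete $v_0$. Reduced weight in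 $T$ with root $v_r$: $\overline w(v_r)=1$; if $v_i$ is a child of the root, $\overline w(v_i)$ is the number of vertices of the subtree rooted at $v_i$ (including $v_i$); otherwise $\overline w(v_i)=0$. On $\widetilde{\mathcal T}_n$ (augmented rooted labeled trees $(T,\varepsilon)$), if $v_r$ is the root of $T$: $\sigma_i(T,\varepsilon)=(\sigma_iT,\varepsilon)$ for $i\ne r-1$, and $\sigma_{r-1}(T,\varepsilon)=(\sigma_{r-1}T,\varepsilon+\overline w(v_{r-1}))$ with $\overline w$ computed in $T$. These maps define actions of the braid group $B_n$ on $\mathcal T_n$ (via the first components) and on $\widetilde{\mathcal T}_n$. *)

theory Defs
  imports Main
begin

text \<open>A rooted tree with vertices labelled 1..n is encoded by its parent function
  par :: nat => nat.  The root v_r has par r = 0, i.e. the auxiliary vertex v_0 of T_+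
  is its parent; labels outside {1..n} are mapped to 0 (canonical encoding).\<close>

definition is_tree :: "nat \<Rightarrow> (nat \<Rightarrow> nat) \<Rightarrow> bool" where
  "is_tree n par \<longleftrightarrow>
     (\<forall>j. j \<notin> {1..n} \<longrightarrow> par j = 0) \<and>
     (\<forall>j\<in>{1..n}. par j \<le> n \<and> par j \<noteq> j) \<and>
     card {j\<in>{1..n}. par j = 0} = 1 \<and>
     (\<forall>j\<in>{1..n}. \<exists>m. (par ^^ m) j = 0)"

definition swp :: "nat \<Rightarrow> nat \<Rightarrow> nat" where
  "swp i x = (if x = i then Suc i else if x = Suc i then i else x)"

definition sigma :: "nat \<Rightarrow> (nat \<Rightarrow> nat) \<Rightarrow> (nat \<Rightarrow> nat)" where
  "sigma i par =
    (if par (Suc i) = 0 then swp i \<circ> par \<circ> swp i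
     else if par (Suc i) = i then par(Suc i := par i, i := Suc i)
     else if par i = Suc i then (\<lambda>j. if j = i \<or> j = Suc i then par (Suc i) else swp i (par j))
     else if par i = par (Suc i) then (\<lambda>j. if j = i then par i else if j = Suc i then i else swp i (par j))
     else swp i \<circ> par \<circ> swp i)"

definition rweight :: "nat \<Rightarrow> (nat \<Rightarrow> nat) \<Rightarrow> nat \<Rightarrow> nat" where
  "rweight n par v =
    (if par v = 0 then 1
     else if par (par v) = 0 then card {j\<in>{1..n}. \<exists>m. (par ^^ m) j = v}
     else 0)"

text \<open>The map sigma_i on augmented trees (T, eps), eps in Z/nZ represented by {0..<n}.
  v_{i+1} is the root iff i = r - 1.\<close>
definition asigma :: "nat \<Rightarrow> nat \<Rightarrow> (nat \<Rightarrow> nat) \<times> int \<Rightarrow> (nat \<Rightarrow> nat) \<times> int" where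
  "asigma n i Te = (case Te of (par, e) \<Rightarrow>
     (sigma i par, if par (Suc i) = 0 then (e + int (rweight n par i)) mod int n else e))"

definition delta :: "nat \<Rightarrow> (nat \<Rightarrow> nat) \<Rightarrow> (nat \<Rightarrow> nat)" where
  "delta m = foldr (\<lambda>i f. sigma i \<circ> f) [1..<m] id"

definition adelta :: "nat \<Rightarrow> nat \<Rightarrow> (nat \<Rightarrow> nat) \<times> int \<Rightarrow> (nat \<Rightarrow> nat) \<times> int" where
  "adelta n m = foldr (\<lambda>i f. asigma n i \<circ> f) [1..<m] id"

definition Garside :: "nat \<Rightarrow> (nat \<Rightarrow> nat) \<Rightarrow> (nat \<Rightarrow> nat)" where
  "Garside n = foldr (\<lambda>m f. delta m \<circ> f) (rev [2..<Suc n]) id"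

definition aGarside :: "nat \<Rightarrow> (nat \<Rightarrow> nat) \<times> int \<Rightarrow> (nat \<Rightarrow> nat) \<times> int" where
  "aGarside n = foldr (\<lambda>m f. adelta n m \<circ> f) (rev [2..<Suc n]) id"

end

theory Submission
  imports Defs "HOL-Combinatorics.Transposition"
begin

definition sigma_fst :: "nat \<Rightarrow> nat \<Rightarrow> nat \<Rightarrow> nat \<Rightarrow> nat" where
  "sigma_fst u v a b =
     (if b = 0 then 0 else if b = u then v else if a = v then b else if a = b then a
      else transpose u v b)"
definition sigma_snd :: "nat \<Rightarrow> nat \<Rightarrow> nat \<Rightarrow> nat \<Rightarrow> nat" where
  "sigma_snd u v a b =
     (if b = 0 then transpose u v a else if b = u then a else if a = v then b else if a = b then u
      else transpose u v a)"
definition sigma_rest :: "nat \<Rightarrow> nat \<Rightarrow> nat \<Rightarrow> nat \<Rightarrow> nat" where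
  "sigma_rest u v b = (if b = u then id else transpose u v)"
definition sigma_pair :: "nat \<Rightarrow> nat \<Rightarrow> (nat \<Rightarrow> nat) \<Rightarrow> nat \<Rightarrow> nat" where
  "sigma_pair u v f x =
     (if x = u then sigma_fst u v (f u) (f v)
      else if x = v then sigma_snd u v (f u) (f v)
      else sigma_rest u v (f v) (f x))"
lemma swp_eq_transpose: "swp i = transpose i (Suc i)"
  by (simp add: fun_eq_iff swp_def transpose_def)
lemma sigma_eq_sigma_pair: "1 \<le> i \<Longrightarrow> sigma i par x = sigma_pair i (Suc i) par x"
  unfolding sigma_def sigma_pair_def sigma_fst_def sigma_snd_def sigma_rest_def swp_eq_transpose
  by (auto simp: transpose_def)
lemma transpose_relabel:
  "inj_on \<phi> S \<Longrightarrow> {u, v, x} \<subseteq> S \<Longrightarrow> transpose (\<phi> u) (\<phi> v) (\<phi> x) = \<phi> (transpose u v x)"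
  by (simp add: transpose_def inj_on_eq_iff)

lemma sigma_fst_relabel:
  assumes "inj_on \<phi> S" "{0, u, v, a, b} \<subseteq> S" "\<phi> 0 = 0"
  shows "sigma_fst (\<phi> u) (\<phi> v) (\<phi> a) (\<phi> b) = \<phi> (sigma_fst u v a b)"
proof -
  have "\<phi> b = 0 \<longleftrightarrow> b = 0"
    using assms inj_on_eq_iff[OF assms(1), of b 0] by simp
  then show ?thesis
    using assms by (simp add: sigma_fst_def inj_on_eq_iff[OF assms(1)] transpose_relabel)
qed

lemma sigma_snd_relabel:
  assumes "inj_on \<phi> S" "{0, u, v, a, b} \<subseteq> S" "\<phi> 0 = 0"
  shows "sigma_snd (\<phi> u) (\<phi> v) (\<phi> a) (\<phi> b) = \<phi> (sigma_snd u v a b)"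
proof -
  have "\<phi> b = 0 \<longleftrightarrow> b = 0"
    using assms inj_on_eq_iff[OF assms(1), of b 0] by simp
  then show ?thesis
    using assms by (simp add: sigma_snd_def inj_on_eq_iff[OF assms(1)] transpose_relabel)
qed

lemma sigma_rest_relabel:
  assumes "inj_on \<phi> S" "{u, v, b, x} \<subseteq> S"
  shows "sigma_rest (\<phi> u) (\<phi> v) (\<phi> b) (\<phi> x) = \<phi> (sigma_rest u v b x)"
  using assms by (simp add: sigma_rest_def inj_on_eq_iff[OF assms(1)] transpose_relabel)

lemma sigma_pair_simps:
  "sigma_pair u v f u = sigma_fst u v (f u) (f v)"
  "u \<noteq> v \<Longrightarrow> sigma_pair u v f v = sigma_snd u v (f u) (f v)"
  "x \<noteq> u \<Longrightarrow> x \<noteq> v \<Longrightarrow> sigma_pair u v f x = sigma_rest u v (f v) (f x)"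
  by (simp_all add: sigma_pair_def)

lemma sigma_parts_perm:
  assumes "inj \<pi>" "\<pi> 0 = 0" "\<pi> u = u" "\<pi> v = v"
  shows "sigma_fst u v (\<pi> a) (\<pi> b) = \<pi> (sigma_fst u v a b)"
    and "sigma_snd u v (\<pi> a) (\<pi> b) = \<pi> (sigma_snd u v a b)"
    and "sigma_rest u v (\<pi> b) = sigma_rest u v b"
    and "sigma_rest u v b (\<pi> x) = \<pi> (sigma_rest u v b x)"
proof -
  show "sigma_fst u v (\<pi> a) (\<pi> b) = \<pi> (sigma_fst u v a b)"
    by (metis sigma_fst_relabel[OF assms(1) subset_UNIV assms(2)] assms(3,4))
  show "sigma_snd u v (\<pi> a) (\<pi> b) = \<pi> (sigma_snd u v a b)"
    by (metis sigma_snd_relabel[OF assms(1) subset_UNIV assms(2)] assms(3,4))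
  show rest: "sigma_rest u v (\<pi> b) = sigma_rest u v b"
    using inj_eq[OF assms(1), of b u] assms(3) by (simp add: sigma_rest_def)
  show "sigma_rest u v b (\<pi> x) = \<pi> (sigma_rest u v b x)"
    using sigma_rest_relabel[OF assms(1), of u v b x] assms(3,4) by (simp add: rest)
qed

lemma sigma_pair_commute:
  assumes "distinct [u, v, u', v']" "0 \<notin> {u, v, u', v'}"
  shows "sigma_pair u v (sigma_pair u' v' f) = sigma_pair u' v' (sigma_pair u v f)"
proof
  fix x
  define \<rho> where "\<rho> = sigma_rest u v (f v)"
  define \<rho>' where "\<rho>' = sigma_rest u' v' (f v')"
  have "inj \<rho>" "\<rho> 0 = 0" "\<rho> u' = u'" "\<rho> v' = v'"
    using assms by (auto simp: \<rho>_def sigma_rest_def)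
  note \<rho> = sigma_parts_perm[OF this]
  have "inj \<rho>'" "\<rho>' 0 = 0" "\<rho>' u = u" "\<rho>' v = v"
    using assms by (auto simp: \<rho>'_def sigma_rest_def)
  note \<rho>' = sigma_parts_perm[OF this]
  have comm: "\<rho> (\<rho>' y) = \<rho>' (\<rho> y)" for y
    unfolding \<rho>_def by (rule \<rho>'(4))
  have neq: "u' \<noteq> u" "u' \<noteq> v" "v' \<noteq> u" "v' \<noteq> v" "u \<noteq> u'" "u \<noteq> v'" "v \<noteq> u'" "v \<noteq> v'"
    "u \<noteq> v" "u' \<noteq> v'"
    using assms(1) by auto
  consider "x = u" | "x = v" | "x = u'" | "x = v'" | "x \<notin> {u, v, u', v'}" by blast
  then show "sigma_pair u v (sigma_pair u' v' f) x = sigma_pair u' v' (sigma_pair u v f) x"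
    by cases (simp_all add: sigma_pair_simps \<rho> \<rho>' neq comm flip: \<rho>_def \<rho>'_def)
qed

lemma sigma_fst_in: "{0, u, v, a, b} \<subseteq> S \<Longrightarrow> sigma_fst u v a b \<in> S"
  by (auto simp: sigma_fst_def transpose_def)

lemma sigma_snd_in: "{u, v, a, b} \<subseteq> S \<Longrightarrow> sigma_snd u v a b \<in> S"
  by (auto simp: sigma_snd_def transpose_def)

lemma sigma_rest_in: "{u, v, x} \<subseteq> S \<Longrightarrow> sigma_rest u v b x \<in> S"
  by (auto simp: sigma_rest_def transpose_def)

definition window :: "nat \<Rightarrow> nat \<Rightarrow> nat \<Rightarrow> nat \<Rightarrow> nat \<Rightarrow> nat \<Rightarrow> nat \<Rightarrow> nat \<Rightarrow> nat" where
  "window u v w a b c d x = (if x = u then a else if x = v then b else if x = w then c else d)"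

lemma sigma_pair_window:
  assumes "distinct [u, v, w]"
  shows "sigma_pair u v (window u v w a b c d) =
           window u v w (sigma_fst u v a b) (sigma_snd u v a b) (sigma_rest u v b c) (sigma_rest u v b d)"
    and "sigma_pair v w (window u v w a b c d) =
           window u v w (sigma_rest v w c a) (sigma_fst v w b c) (sigma_snd v w b c) (sigma_rest v w c d)"
  using assms by (auto simp: fun_eq_iff sigma_pair_def window_def)

lemma window_relabel:
  assumes "inj_on \<phi> S" "{u, v, w, x} \<subseteq> S"
  shows "window (\<phi> u) (\<phi> v) (\<phi> w) (\<phi> a) (\<phi> b) (\<phi> c) (\<phi> d) (\<phi> x) = \<phi> (window u v w a b c d x)"
  using assms by (simp add: window_def inj_on_eq_iff)

lemma window_in: "{a, b, c, d} \<subseteq> S \<Longrightarrow> window u v w a b c d x \<in> S"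
  by (simp add: window_def)

definition braid_lhs :: "nat \<Rightarrow> nat \<Rightarrow> nat \<Rightarrow> (nat \<Rightarrow> nat) \<Rightarrow> nat \<Rightarrow> nat" where
  "braid_lhs u v w f = sigma_pair u v (sigma_pair v w (sigma_pair u v f))"

definition braid_rhs :: "nat \<Rightarrow> nat \<Rightarrow> nat \<Rightarrow> (nat \<Rightarrow> nat) \<Rightarrow> nat \<Rightarrow> nat" where
  "braid_rhs u v w f = sigma_pair v w (sigma_pair u v (sigma_pair v w f))"

definition short_cycle_free :: "nat \<Rightarrow> nat \<Rightarrow> nat \<Rightarrow> nat \<Rightarrow> nat \<Rightarrow> nat \<Rightarrow> bool" where
  "short_cycle_free u v w a b c \<longleftrightarrow>
     a \<noteq> u \<and> b \<noteq> v \<and> c \<noteq> w \<and> \<not> (a = v \<and> b = u) \<and> \<not> (b = w \<and> c = v) \<and> \<not> (a = w \<and> c = u) \<and>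
     \<not> (a = v \<and> b = w \<and> c = u) \<and> \<not> (a = w \<and> c = v \<and> b = u)"

lemma braid_window_123:
  assumes "a < 5" "b < 6" "c < 7" "short_cycle_free 1 2 3 a b c"
  shows "\<forall>d\<in>{1, 2, 3}. braid_lhs 1 2 3 (window 1 2 3 a b c d) = braid_rhs 1 2 3 (window 1 2 3 a b c d)"
proof -
  have "a = 0 \<or> a = 1 \<or> a = 2 \<or> a = 3 \<or> a = 4"
    and "b = 0 \<or> b = 1 \<or> b = 2 \<or> b = 3 \<or> b = 4 \<or> b = 5"
    and "c = 0 \<or> c = 1 \<or> c = 2 \<or> c = 3 \<or> c = 4 \<or> c = 5 \<or> c = 6"
    using assms(1-3) by auto
  then show ?thesis
    using assms(4) unfolding braid_lhs_def braid_rhs_def short_cycle_free_def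
    by (elim disjE; simp add: sigma_pair_window[of 1 2 3, simplified] sigma_fst_def sigma_snd_def
        sigma_rest_def)
qed

lemma braid_window_relabel:
  assumes "inj_on \<phi> S" "{0, u, v, w, a, b, c, d, z} \<subseteq> S" "\<phi> 0 = 0" "distinct [u, v, w]"
  shows "braid_lhs (\<phi> u) (\<phi> v) (\<phi> w) (window (\<phi> u) (\<phi> v) (\<phi> w) (\<phi> a) (\<phi> b) (\<phi> c) (\<phi> d)) (\<phi> z)
           = \<phi> (braid_lhs u v w (window u v w a b c d) z)"
    and "braid_rhs (\<phi> u) (\<phi> v) (\<phi> w) (window (\<phi> u) (\<phi> v) (\<phi> w) (\<phi> a) (\<phi> b) (\<phi> c) (\<phi> d)) (\<phi> z)
           = \<phi> (braid_rhs u v w (window u v w a b c d) z)"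
    and "braid_lhs u v w (window u v w a b c d) z \<in> S"
    and "braid_rhs u v w (window u v w a b c d) z \<in> S"
proof -
  have "distinct [\<phi> u, \<phi> v, \<phi> w]"
    using assms(2,4) by (simp add: inj_on_eq_iff[OF assms(1)])
  note window = sigma_pair_window[OF this] sigma_pair_window[OF assms(4)]
  note relabel = sigma_fst_relabel[OF assms(1) _ assms(3)] sigma_snd_relabel[OF assms(1) _ assms(3)]
    sigma_rest_relabel[OF assms(1)] window_relabel[OF assms(1)]
  note closed = sigma_fst_in sigma_snd_in sigma_rest_in window_in
  show "braid_lhs (\<phi> u) (\<phi> v) (\<phi> w) (window (\<phi> u) (\<phi> v) (\<phi> w) (\<phi> a) (\<phi> b) (\<phi> c) (\<phi> d)) (\<phi> z)
           = \<phi> (braid_lhs u v w (window u v w a b c d) z)"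
    using assms(2) by (simp add: braid_lhs_def window relabel closed)
  show "braid_rhs (\<phi> u) (\<phi> v) (\<phi> w) (window (\<phi> u) (\<phi> v) (\<phi> w) (\<phi> a) (\<phi> b) (\<phi> c) (\<phi> d)) (\<phi> z)
           = \<phi> (braid_rhs u v w (window u v w a b c d) z)"
    using assms(2) by (simp add: braid_rhs_def window relabel closed)
  show "braid_lhs u v w (window u v w a b c d) z \<in> S" "braid_rhs u v w (window u v w a b c d) z \<in> S"
    using assms(2) by (simp_all add: braid_lhs_def braid_rhs_def window closed)
qed

lemma short_cycle_free_relabel:
  assumes "inj_on \<phi> S" "{u, v, w, a, b, c} \<subseteq> S"
  shows "short_cycle_free (\<phi> u) (\<phi> v) (\<phi> w) (\<phi> a) (\<phi> b) (\<phi> c) \<longleftrightarrow> short_cycle_free u v w a b c"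
  using assms by (simp add: short_cycle_free_def inj_on_eq_iff)

lemma braid_window:
  assumes "distinct [u, v, w]" "0 \<notin> {u, v, w}" "short_cycle_free u v w a b c" "d \<in> {u, v, w}"
  shows "braid_lhs u v w (window u v w a b c d) = braid_rhs u v w (window u v w a b c d)"
proof
  fix z
  define S where "S = {0, u, v, w, a, b, c, z}"
  define \<phi> :: "nat \<Rightarrow> nat" where "\<phi> y = (if y = 0 then 0 else if y = u then 1 else if y = v then 2 else if y = w then 3
    else if y = a then 4 else if y = b then 5 else if y = c then 6 else 7)" for y :: nat
  define \<psi> where "\<psi> y = (if y = 0 then 0 else if y = 1 then u else if y = 2 then v else if y = 3 then w
    else if y = 4 then a else if y = 5 then b else if y = 6 then c else z)" for y :: nat
  have "\<psi> (\<phi> y) = y" if "y \<in> S" for y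
    using that assms(1,2) by (auto simp: S_def \<phi>_def \<psi>_def)
  then have inj: "inj_on \<phi> S"
    by (rule inj_on_inverseI)
  have \<phi>: "\<phi> 0 = 0" "\<phi> u = 1" "\<phi> v = 2" "\<phi> w = 3" "\<phi> a < 5" "\<phi> b < 6" "\<phi> c < 7" "\<phi> d \<in> {1, 2, 3}"
    using assms(1,2,4) by (auto simp: \<phi>_def)
  have S: "{0, u, v, w, a, b, c, d, z} \<subseteq> S"
    using assms(4) by (auto simp: S_def)
  have scf: "short_cycle_free 1 2 3 (\<phi> a) (\<phi> b) (\<phi> c)"
    using short_cycle_free_relabel[OF inj, of u v w a b c] S assms(3) by (simp add: \<phi>)
  have "braid_lhs 1 2 3 (window 1 2 3 (\<phi> a) (\<phi> b) (\<phi> c) (\<phi> d)) (\<phi> z)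
      = braid_rhs 1 2 3 (window 1 2 3 (\<phi> a) (\<phi> b) (\<phi> c) (\<phi> d)) (\<phi> z)"
    using braid_window_123[OF \<phi>(5-7) scf, rule_format, OF \<phi>(8)] \<phi>(2-4) by simp
  then have "\<phi> (braid_lhs u v w (window u v w a b c d) z) = \<phi> (braid_rhs u v w (window u v w a b c d) z)"
    using braid_window_relabel(1,2)[OF inj S \<phi>(1) assms(1)] by (simp add: \<phi>)
  then show "braid_lhs u v w (window u v w a b c d) z = braid_rhs u v w (window u v w a b c d) z"
    using braid_window_relabel(3,4)[OF inj S \<phi>(1) assms(1)] by (simp add: inj_on_eq_iff[OF inj])
qed

lemma sigma_pair_agree:
  "\<forall>y\<in>A. f y = g y \<Longrightarrow> u \<in> A \<Longrightarrow> v \<in> A \<Longrightarrow> \<forall>y\<in>A. sigma_pair u v f y = sigma_pair u v g y"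
  by (simp add: sigma_pair_def)

lemma braid_cong:
  assumes "\<forall>y\<in>{u, v, w, x}. f y = g y"
  shows "braid_lhs u v w f x = braid_lhs u v w g x" and "braid_rhs u v w f x = braid_rhs u v w g x"
proof -
  let ?A = "{u, v, w, x}"
  have uv: "\<forall>y\<in>?A. sigma_pair u v f y = sigma_pair u v g y"
    and vw: "\<forall>y\<in>?A. sigma_pair v w f y = sigma_pair v w g y"
    by (rule sigma_pair_agree[OF assms]; simp)+
  have lhs: "\<forall>y\<in>?A. sigma_pair v w (sigma_pair u v f) y = sigma_pair v w (sigma_pair u v g) y"
    by (rule sigma_pair_agree[OF uv]) simp_all
  show "braid_lhs u v w f x = braid_lhs u v w g x"
    unfolding braid_lhs_def using sigma_pair_agree[OF lhs, where u = u and v = v] by simp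
  have rhs: "\<forall>y\<in>?A. sigma_pair u v (sigma_pair v w f) y = sigma_pair u v (sigma_pair v w g) y"
    by (rule sigma_pair_agree[OF vw]) simp_all
  show "braid_rhs u v w f x = braid_rhs u v w g x"
    unfolding braid_rhs_def using sigma_pair_agree[OF rhs, where u = v and v = w] by simp
qed

lemma sigma_rest_other: "x \<notin> {u, v} \<Longrightarrow> sigma_rest u v b x = x"
  by (simp add: sigma_rest_def)

lemma braid_outside:
  assumes "x \<notin> {u, v, w}" "f x \<notin> {u, v, w}"
  shows "braid_lhs u v w f x = f x" and "braid_rhs u v w f x = f x"
  using assms by (simp_all add: braid_lhs_def braid_rhs_def sigma_pair_def sigma_rest_other)

lemma sigma_pair_braid:
  assumes "distinct [u, v, w]" "0 \<notin> {u, v, w}" "short_cycle_free u v w (f u) (f v) (f w)"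
  shows "sigma_pair u v (sigma_pair v w (sigma_pair u v f)) = sigma_pair v w (sigma_pair u v (sigma_pair v w f))"
proof
  fix x
  show "sigma_pair u v (sigma_pair v w (sigma_pair u v f)) x = sigma_pair v w (sigma_pair u v (sigma_pair v w f)) x"
  proof (cases "x \<notin> {u, v, w} \<and> f x \<notin> {u, v, w}")
    case True
    then show ?thesis
      using braid_outside[of x u v w f] by (simp add: braid_lhs_def braid_rhs_def)
  next
    case False
    define d where "d = (if x \<in> {u, v, w} then u else f x)"
    let ?g = "window u v w (f u) (f v) (f w) d"
    have "\<forall>y\<in>{u, v, w, x}. f y = ?g y" "d \<in> {u, v, w}"
      using False by (auto simp: window_def d_def)
    then show ?thesis
      using braid_cong[of u v w x f ?g] braid_window[OF assms] by (simp add: braid_lhs_def braid_rhs_def)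
  qed
qed



definition acyclic_parents :: "(nat \<Rightarrow> nat) \<Rightarrow> bool" where
  "acyclic_parents f \<longleftrightarrow> (\<exists>h :: nat \<Rightarrow> nat. \<forall>j. f j \<noteq> 0 \<longrightarrow> h (f j) < h j)"

lemma acyclic_parents_short_cycle_free:
  assumes "acyclic_parents f" "0 \<notin> {u, v, w}"
  shows "short_cycle_free u v w (f u) (f v) (f w)"
proof -
  obtain h :: "nat \<Rightarrow> nat" where h: "\<forall>j. f j \<noteq> 0 \<longrightarrow> h (f j) < h j"
    using assms(1) unfolding acyclic_parents_def by blast
  show ?thesis
    using h[rule_format, of u] h[rule_format, of v] h[rule_format, of w] assms(2)
    unfolding short_cycle_free_def by auto
qed

lemma sigma_pair_eq_conj:
  assumes "f v = 0 \<or> f v \<noteq> u \<and> f u \<noteq> v \<and> f u \<noteq> f v" "0 \<notin> {u, v}"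
  shows "sigma_pair u v f x = transpose u v (f (transpose u v x))"
  using assms by (auto simp: sigma_pair_def sigma_fst_def sigma_snd_def sigma_rest_def)

lemma transpose_eq_0_iff: "0 \<notin> {u, v} \<Longrightarrow> transpose u v x = 0 \<longleftrightarrow> x = 0"
  by (auto simp: transpose_def)

lemma acyclic_parentsI: "(\<And>j. f j \<noteq> 0 \<Longrightarrow> h (f j) < (h j :: nat)) \<Longrightarrow> acyclic_parents f"
  unfolding acyclic_parents_def by blast

lemma sigma_pair_other_cases:
  "x \<notin> {u, v} \<Longrightarrow> sigma_pair u v f x \<in> {f x, transpose u v (f x)}"
  by (simp add: sigma_pair_def sigma_rest_def)

lemma rank_outside:
  fixes h h' :: "nat \<Rightarrow> nat"
  assumes "h p < h j" "j \<notin> {u, v}" "y \<in> {p, transpose u v p}"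
    and "\<And>x. x \<notin> {u, v} \<Longrightarrow> h' x = 3 * h x"
    and "h' u < 3 * min (h u) (h v) + 3" "h' v < 3 * min (h u) (h v) + 3"
  shows "h' y < h' j"
proof (cases "p \<in> {u, v}")
  case True
  then have "y \<in> {u, v}" "min (h u) (h v) < h j"
    using assms(1,3) by (auto simp: transpose_def)
  then show ?thesis
    using assms(2,4-6) by auto
next
  case False
  then show ?thesis
    using assms(1-4) by (auto simp: transpose_def)
qed

lemma acyclic_parents_sigma_pair:
  assumes "acyclic_parents f" "u \<noteq> v" "0 \<notin> {u, v}"
  shows "acyclic_parents (sigma_pair u v f)"
proof -
  obtain h :: "nat \<Rightarrow> nat" where h: "\<And>j. f j \<noteq> 0 \<Longrightarrow> h (f j) < h j"
    using assms(1) unfolding acyclic_parents_def by blast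
  have scf: "short_cycle_free u v u (f u) (f v) (f u)"
    using acyclic_parents_short_cycle_free[OF assms(1), of u v u] assms(3) by simp
  let ?g = "sigma_pair u v f"
  have outside: "h (f j) < h j" "?g j \<in> {f j, transpose u v (f j)}" if "j \<notin> {u, v}" "?g j \<noteq> 0" for j
  proof -
    show g: "?g j \<in> {f j, transpose u v (f j)}"
      by (rule sigma_pair_other_cases[OF that(1)])
    then have "f j \<noteq> 0"
      using that(2) by (metis empty_iff insert_iff transpose_eq_0_iff[OF assms(3)])
    then show "h (f j) < h j"
      by (rule h)
  qed
  have by_rank: "acyclic_parents ?g"
    if "\<And>x. x \<notin> {u, v} \<Longrightarrow> h' x = 3 * h x"
      "h' u < 3 * min (h u) (h v) + 3" "h' v < 3 * min (h u) (h v) + 3"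
      "?g u \<noteq> 0 \<Longrightarrow> h' (?g u) < h' u" "?g v \<noteq> 0 \<Longrightarrow> h' (?g v) < h' v"
    for h' :: "nat \<Rightarrow> nat"
  proof (rule acyclic_parentsI)
    fix j assume j: "?g j \<noteq> 0"
    consider "j = u" | "j = v" | "j \<notin> {u, v}" by blast
    then show "h' (?g j) < h' j"
    proof cases
      case 3
      show ?thesis
        by (rule rank_outside[OF outside(1)[OF 3 j] 3 outside(2)[OF 3 j]]) (use that in auto)
    qed (use that j in auto)
  qed
  consider (conj) "f v = 0 \<or> f v \<noteq> u \<and> f u \<noteq> v \<and> f u \<noteq> f v"
    | (child) "f v = u" | (parent) "f v \<noteq> 0" "f v \<noteq> u" "f u = v"
    | (siblings) "f v \<noteq> 0" "f v \<noteq> u" "f u \<noteq> v" "f u = f v"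
    by blast
  then show ?thesis
  proof cases
    case conj
    have "h (transpose u v (?g j)) < h (transpose u v j)" if "?g j \<noteq> 0" for j
    proof -
      have "f (transpose u v j) \<noteq> 0"
        using that transpose_eq_0_iff[OF assms(3)] by (metis sigma_pair_eq_conj[OF conj assms(3)])
      then show ?thesis
        using h by (simp add: sigma_pair_eq_conj[OF conj assms(3)])
    qed
    then show ?thesis
      by (intro acyclic_parentsI[where h = "h \<circ> transpose u v"]) simp
  next
    case child
    have "?g u = v" "?g v = f u" "h u < h v" "f u \<noteq> u" "f u \<noteq> v"
      using child scf h[of v] assms(2,3)
      by (auto simp: sigma_pair_def sigma_fst_def sigma_snd_def short_cycle_free_def)
    then show ?thesis
      using h[of u] assms(2)
      by (intro by_rank[where h' = "\<lambda>j. if j = u then 3 * h u + 1 else if j = v then 3 * h u else 3 * h j"]) auto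
  next
    case parent
    have "?g u = f v" "?g v = f v" "h v < h u" "h (f v) < h v" "f v \<noteq> v"
      using parent scf h[of u] h[of v] assms(2,3)
      by (auto simp: sigma_pair_def sigma_fst_def sigma_snd_def short_cycle_free_def)
    then show ?thesis
      using parent(2) assms(2)
      by (intro by_rank[where h' = "\<lambda>j. if j \<in> {u, v} then 3 * h v else 3 * h j"]) auto
  next
    case siblings
    have "?g u = f u" "?g v = u" "h (f u) < h u" "h (f u) < h v" "f u \<notin> {u, v}"
      using siblings scf h[of u] h[of v] assms(2,3)
      by (auto simp: sigma_pair_def sigma_fst_def sigma_snd_def short_cycle_free_def)
    then show ?thesis
      using assms(2)
      by (intro by_rank[where h' = "\<lambda>j. if j = u then 3 * h (f u) + 1 else if j = v then 3 * h (f u) + 2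
        else 3 * h j"]) auto
  qed
qed



definition garside_word :: "nat \<Rightarrow> nat list" where
  "garside_word m = concat (map (\<lambda>k. [1..<k]) (rev [2..<Suc m]))"

lemma garside_word_Suc: "garside_word (Suc m) = [1..<Suc m] @ garside_word m"
  by (cases m) (auto simp: garside_word_def)

lemma garside_word_le_1: "m \<le> 1 \<Longrightarrow> garside_word m = []"
  by (auto simp: garside_word_def le_Suc_eq)

lemma set_garside_word: "set (garside_word m) \<subseteq> {1..<m}"
  by (induction m) (auto simp: garside_word_Suc garside_word_le_1)

lemma map_diff_upt: "map (\<lambda>i. m - i) [1..<m] = rev [1..<m]"
  by (rule nth_equalityI) (auto simp: rev_nth)

locale braid_action =
  fixes X :: "'a set" and s :: "nat \<Rightarrow> 'a \<Rightarrow> 'a"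
  assumes s_closed: "1 \<le> i \<Longrightarrow> x \<in> X \<Longrightarrow> s i x \<in> X"
    and s_commute: "1 \<le> i \<Longrightarrow> Suc i < j \<Longrightarrow> x \<in> X \<Longrightarrow> s i (s j x) = s j (s i x)"
    and s_braid: "1 \<le> i \<Longrightarrow> x \<in> X \<Longrightarrow> s i (s (Suc i) (s i x)) = s (Suc i) (s i (s (Suc i) x))"
begin

lemma foldr_closed: "\<forall>a\<in>set w. 1 \<le> a \<Longrightarrow> x \<in> X \<Longrightarrow> foldr s w x \<in> X"
  by (induction w) (auto intro: s_closed)

lemma foldr_commute:
  assumes "\<forall>a\<in>set w. 1 \<le> a \<and> (Suc a < i \<or> Suc i < a)" "1 \<le> i" "x \<in> X"
  shows "foldr s w (s i x) = s i (foldr s w x)"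
  using assms(1)
proof (induction w)
  case (Cons a w)
  have "foldr s w x \<in> X"
    using Cons.prems assms(3) by (intro foldr_closed) auto
  then show ?case
    using Cons assms(2) s_commute[of a i] s_commute[of i a] by auto
qed simp

lemma delta_shift:
  assumes "1 \<le> i" "i + 2 \<le> m" "x \<in> X"
  shows "foldr s [1..<m] (s i x) = s (Suc i) (foldr s [1..<m] x)"
proof -
  have split: "foldr s [1..<m] y = foldr s [1..<i] (s i (s (Suc i) (foldr s [i + 2..<m] y)))" for y
    using assms(1,2) upt_add_eq_append[of 1 i "m - i"] by (simp add: upt_conv_Cons)
  let ?y = "foldr s [i + 2..<m] x"
  have y: "?y \<in> X"
    using assms(3) by (intro foldr_closed) auto
  have "foldr s [i + 2..<m] (s i x) = s i ?y"
    using assms by (intro foldr_commute) auto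
  then have "foldr s [1..<m] (s i x) = foldr s [1..<i] (s (Suc i) (s i (s (Suc i) ?y)))"
    unfolding split using s_braid[OF assms(1) y] by simp
  also have "\<dots> = s (Suc i) (foldr s [1..<i] (s i (s (Suc i) ?y)))"
    using assms(1) y by (intro foldr_commute) (auto intro!: s_closed)
  also have "foldr s [1..<i] (s i (s (Suc i) ?y)) = foldr s [1..<m] x"
    unfolding split ..
  finally show ?thesis .
qed

lemma foldr_funpow_closed: "\<forall>a\<in>set w. 1 \<le> a \<Longrightarrow> x \<in> X \<Longrightarrow> (foldr s w ^^ k) x \<in> X"
  by (induction k) (auto intro: foldr_closed)

lemma delta_shift_word:
  assumes "\<forall>a\<in>set w. 1 \<le> a \<and> a + 2 \<le> m" "x \<in> X"
  shows "foldr s [1..<m] (foldr s w x) = foldr s (map Suc w) (foldr s [1..<m] x)"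
  using assms(1)
proof (induction w)
  case (Cons a w)
  have "foldr s w x \<in> X"
    using Cons.prems assms(2) by (intro foldr_closed) auto
  then show ?case
    using Cons delta_shift[of a m "foldr s w x"] by simp
qed simp

lemma delta_square:
  assumes "2 \<le> m" "x \<in> X"
  shows "foldr s [1..<m] (foldr s [1..<m] x) = s 1 (foldr s [1..<m] (foldr s [1..<m - 1] x))"
proof -
  have delta: "[1..<m] = 1 # map Suc [1..<m - 1]"
    using assms(1) by (simp add: upt_conv_Cons map_Suc_upt)
  have "foldr s [1..<m] (foldr s [1..<m] x) = s 1 (foldr s (map Suc [1..<m - 1]) (foldr s [1..<m] x))"
    by (subst delta) simp
  also have "foldr s (map Suc [1..<m - 1]) (foldr s [1..<m] x) = foldr s [1..<m] (foldr s [1..<m - 1] x)"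
    using assms by (intro delta_shift_word[symmetric]) auto
  finally show ?thesis .
qed

lemma rev_upt_Suc: "rev [1..<Suc k] = map Suc (rev [1..<k]) @ [1]" if "1 \<le> k"
proof -
  have "[1..<Suc k] = 1 # map Suc [1..<k]"
    using that by (simp add: upt_conv_Cons map_Suc_upt del: upt_Suc)
  then show ?thesis
    by (simp add: rev_map)
qed

lemma delta_power:
  assumes "2 \<le> m" "1 \<le> k" "k \<le> m" "x \<in> X"
  shows "(foldr s [1..<m] ^^ k) x
    = foldr s (rev [1..<k]) (foldr s [1..<m] ((foldr s [1..<m - 1] ^^ (k - 1)) x))"
  using assms(2,3)
proof (induction k rule: dec_induct)
  case (step k)
  let ?y = "(foldr s [1..<m - 1] ^^ (k - 1)) x"
  have y: "?y \<in> X"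
    using assms(4) by (intro foldr_funpow_closed) auto
  have "(foldr s [1..<m] ^^ Suc k) x = foldr s [1..<m] (foldr s (rev [1..<k]) (foldr s [1..<m] ?y))"
    using step.IH step.prems by simp
  also have "\<dots> = foldr s (map Suc (rev [1..<k])) (foldr s [1..<m] (foldr s [1..<m] ?y))"
    using step.hyps step.prems y by (intro delta_shift_word) (auto intro: foldr_closed)
  also have "foldr s [1..<m] (foldr s [1..<m] ?y) = s 1 (foldr s [1..<m] (foldr s [1..<m - 1] ?y))"
    by (rule delta_square[OF assms(1) y])
  also have "foldr s [1..<m - 1] ?y = (foldr s [1..<m - 1] ^^ (Suc k - 1)) x"
    using step.hyps(1) by (cases k) auto
  finally show ?case
    using rev_upt_Suc[OF step.hyps(1)] by (simp del: upt_Suc)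
qed simp

lemma garside_conj:
  assumes "1 \<le> i" "i < m" "x \<in> X"
  shows "foldr s (garside_word m) (s i x) = s (m - i) (foldr s (garside_word m) x)"
  using assms(2,3)
proof (induction m arbitrary: x)
  case (Suc m)
  show ?case
  proof (cases "i < m")
    case True
    have "foldr s (garside_word m) x \<in> X"
      using Suc.prems set_garside_word[of m] by (intro foldr_closed) auto
    then have "foldr s [1..<Suc m] (s (m - i) (foldr s (garside_word m) x))
        = s (Suc (m - i)) (foldr s [1..<Suc m] (foldr s (garside_word m) x))"
      using True assms(1) by (intro delta_shift) auto
    then show ?thesis
      using Suc True by (simp add: garside_word_Suc Suc_diff_le del: upt_Suc)
  next
    case False
    then have m: "i = m" "1 \<le> m"
      using Suc.prems assms(1) by auto
    let ?z = "foldr s (garside_word (m - 1)) x"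
    have z: "?z \<in> X"
      using Suc.prems set_garside_word[of "m - 1"] by (intro foldr_closed) auto
    have word: "garside_word (Suc m) = [1..<Suc m] @ [1..<m] @ garside_word (m - 1)"
      using m(2) garside_word_Suc[of m] garside_word_Suc[of "m - 1"] by simp
    have "\<forall>a\<in>set (garside_word (m - 1)). 1 \<le> a \<and> Suc a < m"
      using set_garside_word[of "m - 1"] by force
    then have "foldr s (garside_word (m - 1)) (s m x) = s m ?z"
      using m(2) Suc.prems by (intro foldr_commute) auto
    then have "foldr s (garside_word (Suc m)) (s i x) = foldr s [1..<Suc m] (foldr s [1..<Suc m] ?z)"
      using m by (simp add: word del: upt_Suc) simp
    also have "\<dots> = s 1 (foldr s [1..<Suc m] (foldr s [1..<m] ?z))"
      using delta_square[OF _ z, of "Suc m"] m(2) by simp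
    also have "\<dots> = s (Suc m - i) (foldr s (garside_word (Suc m)) x)"
      using m(1) by (simp add: word del: upt_Suc)
    finally show ?thesis .
  qed
qed simp

lemma garside_conj_word:
  assumes "\<forall>a\<in>set w. 1 \<le> a \<and> a < m" "x \<in> X"
  shows "foldr s (garside_word m) (foldr s w x) = foldr s (map (\<lambda>i. m - i) w) (foldr s (garside_word m) x)"
  using assms(1)
proof (induction w)
  case (Cons a w)
  have "foldr s w x \<in> X"
    using Cons.prems assms(2) by (intro foldr_closed) auto
  then show ?case
    using Cons garside_conj[of a m "foldr s w x"] by simp
qed simp

lemma garside_square:
  assumes "1 \<le> m" "x \<in> X"
  shows "foldr s (garside_word m) (foldr s (garside_word m) x) = (foldr s [1..<m] ^^ m) x"
  using assms
proof (induction m arbitrary: x rule: dec_induct)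
  case base
  then show ?case
    by (simp add: garside_word_le_1)
next
  case (step m)
  let ?D = "foldr s (garside_word m)"
  have D: "?D x \<in> X"
    using step.prems set_garside_word[of m] by (intro foldr_closed) auto
  have "foldr s (garside_word (Suc m)) (foldr s (garside_word (Suc m)) x)
      = foldr s (garside_word (Suc m)) (foldr s [1..<Suc m] (?D x))"
    by (simp add: garside_word_Suc del: upt_Suc)
  also have "\<dots> = foldr s (map (\<lambda>i. Suc m - i) [1..<Suc m]) (foldr s (garside_word (Suc m)) (?D x))"
    using D by (intro garside_conj_word) auto
  also have "map (\<lambda>i. Suc m - i) [1..<Suc m] = rev [1..<Suc m]"
    by (rule map_diff_upt)
  also have "foldr s (garside_word (Suc m)) (?D x) = foldr s [1..<Suc m] ((foldr s [1..<m] ^^ m) x)"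
    using step.IH[OF step.prems] by (simp add: garside_word_Suc del: upt_Suc)
  also have "foldr s (rev [1..<Suc m]) (foldr s [1..<Suc m] ((foldr s [1..<m] ^^ m) x))
      = (foldr s [1..<Suc m] ^^ Suc m) x"
    using delta_power[of "Suc m" "Suc m" x] step.hyps step.prems by (simp del: upt_Suc)
  finally show ?case .
qed

end


interpretation sigma_braid: braid_action "{f. acyclic_parents f}" sigma
proof
  fix i j :: nat and x :: "nat \<Rightarrow> nat"
  assume i: "1 \<le> i"
  have sigma: "sigma k = sigma_pair k (Suc k)" if "1 \<le> k" for k
    using that by (simp add: fun_eq_iff sigma_eq_sigma_pair)
  show "x \<in> {f. acyclic_parents f} \<Longrightarrow> sigma i x \<in> {f. acyclic_parents f}"
    using i by (simp add: sigma acyclic_parents_sigma_pair)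
  show "Suc i < j \<Longrightarrow> sigma i (sigma j x) = sigma j (sigma i x)"
    using i by (simp add: sigma sigma_pair_commute)
  show "x \<in> {f. acyclic_parents f} \<Longrightarrow>
      sigma i (sigma (Suc i) (sigma i x)) = sigma (Suc i) (sigma i (sigma (Suc i) x))"
    using i sigma_pair_braid[of i "Suc i" "Suc (Suc i)" x]
      acyclic_parents_short_cycle_free[of x i "Suc i" "Suc (Suc i)"]
    by (simp add: sigma)
qed

lemma foldr_comp_id: "foldr (\<lambda>i f. g i \<circ> f) xs id = foldr g xs"
  by (induction xs) auto

lemma delta_eq_foldr: "delta m = foldr sigma [1..<m]"
  by (simp add: delta_def foldr_comp_id)

lemma Garside_eq_foldr: "Garside n = foldr sigma (garside_word n)"
proof -
  have "foldr (\<lambda>m f. delta m \<circ> f) ms id = foldr sigma (concat (map (\<lambda>k. [1..<k]) ms))" for ms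
    by (induction ms) (simp_all add: delta_eq_foldr)
  then show ?thesis
    by (simp add: Garside_def garside_word_def)
qed

lemma Garside_square_eq_delta_power:
  assumes "acyclic_parents par" "1 \<le> n"
  shows "(Garside n ^^ 2) par = (delta n ^^ n) par"
proof -
  have "(Garside n ^^ 2) par = foldr sigma (garside_word n) (foldr sigma (garside_word n) par)"
    by (simp add: Garside_eq_foldr numeral_2_eq_2)
  also have "\<dots> = (foldr sigma [1..<n] ^^ n) par"
    using assms by (intro sigma_braid.garside_square) auto
  finally show ?thesis
    by (simp only: delta_eq_foldr)
qed

lemma is_tree_parent:
  assumes "is_tree n par"
  shows "j \<notin> {1..n} \<Longrightarrow> par j = 0" and "par j \<le> n" and "j \<in> {1..n} \<Longrightarrow> par j \<noteq> j"
    and "j \<in> {1..n} \<Longrightarrow> \<exists>m. (par ^^ m) j = 0"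
proof -
  have outside: "\<forall>j. j \<notin> {1..n} \<longrightarrow> par j = 0" and inside: "\<forall>j\<in>{1..n}. par j \<le> n \<and> par j \<noteq> j"
    and reach: "\<forall>j\<in>{1..n}. \<exists>m. (par ^^ m) j = 0"
    using assms unfolding is_tree_def by blast+
  show "j \<in> {1..n} \<Longrightarrow> \<exists>m. (par ^^ m) j = 0"
    using reach by blast
  show "j \<notin> {1..n} \<Longrightarrow> par j = 0" "j \<in> {1..n} \<Longrightarrow> par j \<noteq> j"
    using outside inside by blast+
  show "par j \<le> n"
    using outside inside by (metis le0)
qed

lemma is_tree_root:
  assumes "is_tree n par"
  obtains r where "{j \<in> {1..n}. par j = 0} = {r}"
proof -
  have "card {j \<in> {1..n}. par j = 0} = 1"
    using assms unfolding is_tree_def by blast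
  then obtain r where "{j \<in> {1..n}. par j = 0} = {r}"
    by (rule card_1_singletonE)
  then show thesis
    by (rule that)
qed

lemma depth_parent_less:
  fixes par :: "nat \<Rightarrow> nat"
  assumes "(par ^^ m) j = 0" "j \<noteq> 0"
  shows "(LEAST k. (par ^^ k) (par j) = 0) < (LEAST k. (par ^^ k) j = 0)"
proof -
  let ?depth = "\<lambda>j. LEAST k. (par ^^ k) j = 0"
  have reach: "(par ^^ ?depth j) j = 0"
    using assms(1) by (rule LeastI)
  then obtain d where d: "?depth j = Suc d"
    using assms(2) by (cases "?depth j") auto
  then have "(par ^^ d) (par j) = 0"
    using reach by (simp add: funpow_Suc_right del: funpow.simps)
  then have "?depth (par j) \<le> d"
    by (rule Least_le)
  then show ?thesis
    using d by simp
qed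

lemma is_tree_acyclic_parents:
  assumes "is_tree n par"
  shows "acyclic_parents par"
proof (rule acyclic_parentsI[where h = "\<lambda>j. LEAST k. (par ^^ k) j = 0"])
  fix j assume "par j \<noteq> 0"
  then have j: "j \<in> {1..n}"
    using is_tree_parent(1)[OF assms, of j] by metis
  then obtain m where m: "(par ^^ m) j = 0"
    using is_tree_parent(4)[OF assms, of j] by metis
  show "(LEAST k. (par ^^ k) (par j) = 0) < (LEAST k. (par ^^ k) j = 0)"
    using depth_parent_less[OF m] j by simp
qed

definition cyc :: "nat \<Rightarrow> nat \<Rightarrow> nat \<Rightarrow> nat" where
  "cyc n k j = (if j = n then k else if k \<le> j \<and> j < n then Suc j else j)"

definition cyc_inv :: "nat \<Rightarrow> nat \<Rightarrow> nat \<Rightarrow> nat" where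
  "cyc_inv n k j = (if j = k then n else if k < j \<and> j \<le> n then j - 1 else j)"

definition exchange :: "nat \<Rightarrow> nat \<Rightarrow> (nat \<Rightarrow> nat) \<Rightarrow> nat \<Rightarrow> nat" where
  "exchange n k par y =
     (if par n \<noteq> 0 \<and> 1 \<le> y \<and> y < n \<and> (if k \<le> par n then y < k else k \<le> y)
      then transpose (par n) n (par y) else par y)"

definition delta_tail :: "nat \<Rightarrow> nat \<Rightarrow> (nat \<Rightarrow> nat) \<Rightarrow> nat \<Rightarrow> nat" where
  "delta_tail n k par = cyc n k \<circ> exchange n k par \<circ> cyc_inv n k"

definition rot :: "nat \<Rightarrow> (nat \<Rightarrow> nat) \<Rightarrow> nat \<Rightarrow> nat" where
  "rot n par = cyc n 1 \<circ> par \<circ> cyc_inv n 1"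

lemma cyc_inv_cyc: "1 \<le> k \<Longrightarrow> k \<le> n \<Longrightarrow> cyc_inv n k (cyc n k j) = j"
  by (auto simp: cyc_def cyc_inv_def)

lemma cyc_cyc_inv: "1 \<le> k \<Longrightarrow> k \<le> n \<Longrightarrow> cyc n k (cyc_inv n k j) = j"
  by (auto simp: cyc_def cyc_inv_def)

lemma cyc_0: "1 \<le> k \<Longrightarrow> k \<le> n \<Longrightarrow> cyc n k 0 = 0"
  by (simp add: cyc_def)

lemma cyc_shift: "1 \<le> u \<Longrightarrow> Suc u \<le> n \<Longrightarrow> cyc n u = cyc n (Suc u) \<circ> transpose u n"
  by (auto simp: fun_eq_iff cyc_def transpose_def)

lemma cyc_inv_shift: "1 \<le> u \<Longrightarrow> Suc u \<le> n \<Longrightarrow> cyc_inv n u = transpose u n \<circ> cyc_inv n (Suc u)"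
  by (auto simp: fun_eq_iff cyc_inv_def transpose_def)

lemma sigma_pair_conj:
  assumes "\<And>x. \<rho> (\<pi> x) = x" "\<And>x. \<pi> (\<rho> x) = x" "\<pi> 0 = 0"
  shows "sigma_pair (\<pi> u) (\<pi> v) (\<pi> \<circ> f \<circ> \<rho>) = \<pi> \<circ> sigma_pair u v f \<circ> \<rho>"
proof
  fix y
  have inj: "inj \<pi>"
    by (metis assms(1) injI)
  obtain z where y: "y = \<pi> z"
    by (metis assms(2))
  note relabel = sigma_fst_relabel[OF inj subset_UNIV assms(3)] sigma_snd_relabel[OF inj subset_UNIV assms(3)]
    sigma_rest_relabel[OF inj subset_UNIV]
  show "sigma_pair (\<pi> u) (\<pi> v) (\<pi> \<circ> f \<circ> \<rho>) y = (\<pi> \<circ> sigma_pair u v f \<circ> \<rho>) y"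
    unfolding y sigma_pair_def by (simp add: assms(1) inj_eq[OF inj] relabel)
qed

lemma exchange_at_n: "exchange n k par n = par n"
  by (simp add: exchange_def)

lemma sigma_pair_exchange:
  assumes tree: "is_tree n par" and u: "1 \<le> u" "Suc u \<le> n"
  shows "sigma_pair u n (exchange n (Suc u) par) y = transpose u n (exchange n u par (transpose u n y))"
proof -
  define p where "p = par n"
  define a where "a = par u"
  have "p \<noteq> n" "a \<noteq> u" "p \<le> n"
    using is_tree_parent(2,3)[OF tree] u by (auto simp: p_def a_def)
  moreover have "\<not> (a = n \<and> p = u)"
    using acyclic_parents_short_cycle_free[OF is_tree_acyclic_parents[OF tree], of u n u] u
    by (auto simp: a_def p_def short_cycle_free_def)
  moreover have "exchange n (Suc u) par u = (if p \<noteq> 0 \<and> Suc u \<le> p then transpose p n a else a)"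
    "exchange n u par u = (if p \<noteq> 0 \<and> p < u then transpose p n a else a)"
    using u by (auto simp: exchange_def p_def a_def)
  ultimately have at_u_n: "sigma_pair u n (exchange n (Suc u) par) y = transpose u n (exchange n u par (transpose u n y))"
    if "y \<in> {u, n}"
    using that u by (auto simp: sigma_pair_def sigma_fst_def sigma_snd_def exchange_at_n transpose_def
      simp flip: p_def)
  show ?thesis
  proof (cases "y \<in> {u, n}")
    case False
    then have y: "transpose u n y = y" "y \<noteq> u" "y \<noteq> n"
      by auto
    have "sigma_pair u n (exchange n (Suc u) par) y = sigma_rest u n p (exchange n (Suc u) par y)"
      using y by (simp add: sigma_pair_def exchange_at_n p_def)
    also have "\<dots> = transpose u n (exchange n u par y)"
    proof (cases "1 \<le> y \<and> y < n")
      case True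
      then show ?thesis
        using y \<open>p \<noteq> n\<close> \<open>p \<le> n\<close> u
        by (auto simp: sigma_rest_def exchange_def transpose_def simp flip: p_def)
    next
      case False
      then have "par y = 0"
        using y is_tree_parent(1)[OF tree, of y] by auto
      then show ?thesis
        using False u by (auto simp: sigma_rest_def exchange_def transpose_def)
    qed
    finally show ?thesis
      using y by simp
  qed (rule at_u_n)
qed

lemma sigma_delta_tail:
  assumes tree: "is_tree n par" and u: "1 \<le> u" "Suc u \<le> n"
  shows "sigma u (delta_tail n (Suc u) par) = delta_tail n u par"
proof -
  let ?\<pi> = "cyc n (Suc u)" and ?\<rho> = "cyc_inv n (Suc u)"
  have "?\<pi> u = u" "?\<pi> n = Suc u"
    using u by (auto simp: cyc_def)
  then have "sigma u (delta_tail n (Suc u) par)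
      = sigma_pair (?\<pi> u) (?\<pi> n) (?\<pi> \<circ> exchange n (Suc u) par \<circ> ?\<rho>)"
    using u by (simp add: fun_eq_iff sigma_eq_sigma_pair delta_tail_def)
  also have "\<dots> = ?\<pi> \<circ> sigma_pair u n (exchange n (Suc u) par) \<circ> ?\<rho>"
    using u by (intro sigma_pair_conj) (simp_all add: cyc_inv_cyc cyc_cyc_inv cyc_0)
  also have "\<dots> = delta_tail n u par"
    using u by (simp add: fun_eq_iff delta_tail_def cyc_shift cyc_inv_shift sigma_pair_exchange[OF tree])
  finally show ?thesis .
qed

lemma delta_tail_n: "is_tree n par \<Longrightarrow> delta_tail n n par = par"
  using is_tree_parent(2,3)[of n par n]
  by (cases "n = 0") (auto simp: fun_eq_iff delta_tail_def cyc_def cyc_inv_def exchange_def)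

lemma delta_tail_1: "delta_tail n 1 par = rot n par"
  by (simp add: fun_eq_iff delta_tail_def rot_def exchange_def)

lemma foldr_sigma_delta_tail:
  assumes "is_tree n par" "1 \<le> k" "k \<le> n"
  shows "foldr sigma [k..<n] par = delta_tail n k par"
  using assms(3,2)
proof (induction k rule: inc_induct)
  case base
  then show ?case
    using delta_tail_n[OF assms(1)] by simp
next
  case (step k)
  then show ?case
    using sigma_delta_tail[OF assms(1) step.prems, of] by (simp add: upt_conv_Cons)
qed

lemma delta_eq_rot: "is_tree n par \<Longrightarrow> 1 \<le> n \<Longrightarrow> delta n par = rot n par"
  using foldr_sigma_delta_tail[of n par 1] delta_tail_1[of n par] by (simp add: delta_eq_foldr)

definition relabelling :: "nat \<Rightarrow> (nat \<Rightarrow> nat) \<Rightarrow> (nat \<Rightarrow> nat) \<Rightarrow> bool" where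
  "relabelling n \<pi> \<rho> \<longleftrightarrow>
     (\<forall>x. \<rho> (\<pi> x) = x) \<and> (\<forall>x. \<pi> (\<rho> x) = x) \<and> \<pi> 0 = 0 \<and> (\<forall>x. \<pi> x \<le> n \<longleftrightarrow> x \<le> n)"

lemma relabelling_cyc:
  assumes "1 \<le> k" "k \<le> n"
  shows "relabelling n (cyc n k) (cyc_inv n k)"
  using assms by (auto simp: relabelling_def cyc_inv_cyc cyc_cyc_inv cyc_0) (auto simp: cyc_def split: if_splits)

lemma relabelling_simps:
  assumes "relabelling n \<pi> \<rho>"
  shows "\<rho> (\<pi> x) = x" "\<pi> (\<rho> x) = x" "\<pi> x = \<pi> y \<longleftrightarrow> x = y"
    "\<pi> x = 0 \<longleftrightarrow> x = 0" "Suc 0 \<le> \<pi> x \<longleftrightarrow> Suc 0 \<le> x" "\<rho> x = 0 \<longleftrightarrow> x = 0" "Suc 0 \<le> \<rho> x \<longleftrightarrow> Suc 0 \<le> x"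
    "\<pi> x \<le> n \<longleftrightarrow> x \<le> n" "\<rho> x \<le> n \<longleftrightarrow> x \<le> n"
proof -
  have l: "\<forall>x. \<rho> (\<pi> x) = x" and r: "\<forall>x. \<pi> (\<rho> x) = x" and z: "\<pi> 0 = 0"
    and le: "\<forall>x. \<pi> x \<le> n \<longleftrightarrow> x \<le> n"
    using assms unfolding relabelling_def by blast+
  show "\<rho> (\<pi> x) = x" "\<pi> (\<rho> x) = x" "\<pi> x \<le> n \<longleftrightarrow> x \<le> n"
    using l r le by blast+
  show "\<pi> x = \<pi> y \<longleftrightarrow> x = y" "\<rho> x \<le> n \<longleftrightarrow> x \<le> n"
    using l r le by metis+
  show "\<pi> x = 0 \<longleftrightarrow> x = 0" "\<rho> x = 0 \<longleftrightarrow> x = 0"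
    using l r z by metis+
  then show "Suc 0 \<le> \<pi> x \<longleftrightarrow> Suc 0 \<le> x" "Suc 0 \<le> \<rho> x \<longleftrightarrow> Suc 0 \<le> x"
    by (simp_all add: Suc_le_eq flip: neq0_conv)
qed

lemma funpow_relabel:
  assumes "relabelling n \<pi> \<rho>"
  shows "(\<pi> \<circ> f \<circ> \<rho>) ^^ m = \<pi> \<circ> (f ^^ m) \<circ> \<rho>"
  by (induction m) (auto simp: fun_eq_iff relabelling_simps[OF assms])

lemma card_relabel:
  assumes "relabelling n \<pi> \<rho>" "\<And>j. Q (\<pi> j) \<longleftrightarrow> P j"
  shows "card {j \<in> {1..n}. Q j} = card {j \<in> {1..n}. P j}"
proof -
  note simps = relabelling_simps[OF assms(1)]
  have "{j \<in> {1..n}. Q j} = \<pi> ` {j \<in> {1..n}. P j}"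
  proof (intro set_eqI iffI)
    fix j assume "j \<in> {j \<in> {1..n}. Q j}"
    then have "\<rho> j \<in> {j \<in> {1..n}. P j}"
      using assms(2)[of "\<rho> j"] by (simp add: simps)
    then show "j \<in> \<pi> ` {j \<in> {1..n}. P j}"
      using simps(2)[of j] by (metis image_eqI)
  qed (auto simp: assms(2) simps)
  moreover have "inj_on \<pi> {j \<in> {1..n}. P j}"
    by (simp add: inj_on_def simps)
  ultimately show ?thesis
    by (simp add: card_image)
qed

lemma is_tree_relabel:
  assumes tree: "is_tree n f" and \<pi>: "relabelling n \<pi> \<rho>"
  shows "is_tree n (\<pi> \<circ> f \<circ> \<rho>)"
  unfolding is_tree_def
proof (intro conjI allI impI ballI)
  note simps = relabelling_simps[OF \<pi>]
  fix j
  show "j \<notin> {1..n} \<Longrightarrow> (\<pi> \<circ> f \<circ> \<rho>) j = 0"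
    using is_tree_parent(1)[OF tree, of "\<rho> j"] by (simp add: simps)
  assume j: "j \<in> {1..n}"
  show "(\<pi> \<circ> f \<circ> \<rho>) j \<le> n"
    using is_tree_parent(2)[OF tree, of "\<rho> j"] by (simp add: simps)
  show "(\<pi> \<circ> f \<circ> \<rho>) j \<noteq> j"
  proof
    assume "(\<pi> \<circ> f \<circ> \<rho>) j = j"
    then have "f (\<rho> j) = \<rho> j"
      using simps(1) by (metis comp_apply)
    moreover have "\<rho> j \<in> {1..n}"
      using j by (simp add: simps)
    ultimately show False
      by (metis is_tree_parent(3)[OF tree])
  qed
  obtain m where "(f ^^ m) (\<rho> j) = 0"
    using j is_tree_parent(4)[OF tree, of "\<rho> j"] by (auto simp: simps)
  then show "\<exists>m. ((\<pi> \<circ> f \<circ> \<rho>) ^^ m) j = 0"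
    by (auto simp: funpow_relabel[OF \<pi>] simps)
next
  show "card {j \<in> {1..n}. (\<pi> \<circ> f \<circ> \<rho>) j = 0} = 1"
    using card_relabel[OF \<pi>, of "\<lambda>j. (\<pi> \<circ> f \<circ> \<rho>) j = 0" "\<lambda>j. f j = 0"] tree
    by (simp add: relabelling_simps[OF \<pi>] is_tree_def)
qed

lemma rweight_relabel:
  assumes \<pi>: "relabelling n \<pi> \<rho>"
  shows "rweight n (\<pi> \<circ> f \<circ> \<rho>) (\<pi> v) = rweight n f v"
proof -
  have "card {j \<in> {1..n}. \<exists>m. ((\<pi> \<circ> f \<circ> \<rho>) ^^ m) j = \<pi> v} = card {j \<in> {1..n}. \<exists>m. (f ^^ m) j = v}"
    by (rule card_relabel[OF \<pi>]) (simp add: funpow_relabel[OF \<pi>] relabelling_simps[OF \<pi>])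
  then show ?thesis
    by (simp add: rweight_def relabelling_simps[OF \<pi>])
qed

lemma funpow_from_root: "par r = 0 \<Longrightarrow> par 0 = 0 \<Longrightarrow> (par ^^ m) r \<in> {0, r}"
  by (induction m) auto

lemma is_tree_root_unique:
  assumes "is_tree n par" "par r = 0" "r \<in> {1..n}"
  shows "{j \<in> {1..n}. par j = 0} = {r}"
proof -
  obtain r' where roots: "{j \<in> {1..n}. par j = 0} = {r'}"
    using is_tree_root[OF assms(1)] .
  moreover have "r \<in> {j \<in> {1..n}. par j = 0}"
    using assms(2,3) by simp
  ultimately show ?thesis
    by simp
qed

lemma is_tree_parent_below_root:
  assumes tree: "is_tree n par" and root: "par n = 0" "1 \<le> n" and i: "i \<in> {1..<n}"
  shows "par i \<in> {1..n}"
proof -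
  have "i \<notin> {j \<in> {1..n}. par j = 0}"
    using i is_tree_root_unique[OF tree root(1)] root(2) by simp
  then have "par i \<noteq> 0"
    using i by simp
  then show ?thesis
    using is_tree_parent(2)[OF tree, of i] by simp
qed

lemma reaches_root_child:
  assumes tree: "is_tree n par" and root: "par n = 0" "1 \<le> n" and j: "j \<in> {1..<n}"
  shows "\<exists>i m. i \<in> {1..<n} \<and> par i = n \<and> (par ^^ m) j = i"
proof -
  obtain m where "(par ^^ m) j = 0"
    using j is_tree_parent(4)[OF tree, of j] by auto
  then show ?thesis
    using j
  proof (induction m arbitrary: j)
    case (Suc m)
    show ?case
    proof (cases "par j = n")
      case True
      then show ?thesis
        using Suc.prems(2) by (metis funpow_0)
    next
      case False
      then have "par j \<in> {1..<n}"
        using is_tree_parent_below_root[OF tree root Suc.prems(2)] by auto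
      moreover have "(par ^^ m) (par j) = 0"
        using Suc.prems(1) by (simp add: funpow_Suc_right del: funpow.simps)
      ultimately obtain i m' where "i \<in> {1..<n}" "par i = n" "(par ^^ m') (par j) = i"
        using Suc.IH by metis
      then have "i \<in> {1..<n}" "par i = n" "(par ^^ Suc m') j = i"
        by (simp_all add: funpow_Suc_right del: funpow.simps)
      then show ?thesis
        by metis
    qed
  qed simp
qed

lemma root_child_ancestor_unique:
  assumes "par n = 0" "par 0 = 0" "par i = n" "i' \<notin> {0, n}"
    and "(par ^^ a) x = i" "(par ^^ b) x = i'" "a \<le> b"
  shows "i' = i"
proof (cases "b - a")
  case 0
  then show ?thesis
    using assms(5-7) by simp
next
  case (Suc d)
  have "(par ^^ (b - a)) i = i'"
    using assms(5-7) funpow_add[of "b - a" a par] by (simp add: comp_def)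
  then have "(par ^^ d) n = i'"
    using Suc assms(3) by (simp add: funpow_Suc_right del: funpow.simps)
  then show ?thesis
    using funpow_from_root[OF assms(1,2), of d] assms(4) by simp
qed

lemma sum_rweight_root:
  assumes tree: "is_tree n par" and root: "par n = 0" "1 \<le> n"
  shows "(\<Sum>i\<in>{1..<n}. rweight n par i) = n - 1"
proof -
  define desc where "desc i = {j \<in> {1..n}. \<exists>m. (par ^^ m) j = i}" for i
  define C where "C = {i \<in> {1..<n}. par i = n}"
  have par0: "par 0 = 0"
    using is_tree_parent(1)[OF tree, of 0] by simp
  have rweight: "rweight n par i = (if par i = n then card (desc i) else 0)" if i: "i \<in> {1..<n}" for i
  proof -
    have "par i \<in> {1..n}"
      by (rule is_tree_parent_below_root[OF tree root i])
    moreover have "par (par i) = 0 \<longleftrightarrow> par i = n" if "par i \<in> {1..n}"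
      using that is_tree_root_unique[OF tree root(1)] root(2) by auto
    ultimately show ?thesis
      by (simp add: rweight_def desc_def)
  qed
  have "(\<Sum>i\<in>{1..<n}. rweight n par i) = (\<Sum>i\<in>{1..<n}. if par i = n then card (desc i) else 0)"
    by (rule sum.cong) (simp_all add: rweight)
  also have "\<dots> = (\<Sum>i\<in>C. card (desc i))"
    unfolding C_def by (rule sum.inter_filter[symmetric]) simp
  also have "\<dots> = card (\<Union>i\<in>C. desc i)"
  proof (rule card_UN_disjoint[symmetric])
    show "\<forall>i\<in>C. \<forall>i'\<in>C. i \<noteq> i' \<longrightarrow> desc i \<inter> desc i' = {}"
    proof (intro ballI impI)
      fix i i' assume "i \<in> C" "i' \<in> C" "i \<noteq> i'"
      then have "par i = n" "par i' = n" "i \<notin> {0, n}" "i' \<notin> {0, n}"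
        by (auto simp: C_def)
      then have "(par ^^ a) x \<noteq> i \<or> (par ^^ b) x \<noteq> i'" for a b x
        using root_child_ancestor_unique[OF root(1) par0, of i i' a x b]
          root_child_ancestor_unique[OF root(1) par0, of i' i b x a] \<open>i \<noteq> i'\<close>
        by (cases "a \<le> b") auto
      then show "desc i \<inter> desc i' = {}"
        by (auto simp: desc_def)
    qed
  qed (simp_all add: C_def desc_def)
  also have "(\<Union>i\<in>C. desc i) = {1..<n}"
  proof (intro equalityI subsetI)
    fix j assume "j \<in> (\<Union>i\<in>C. desc i)"
    then obtain i m where "i \<in> C" "j \<in> {1..n}" "(par ^^ m) j = i"
      by (auto simp: desc_def)
    moreover have "(par ^^ m) n \<noteq> i" if "i \<in> C"
      using that funpow_from_root[OF root(1) par0, of m] by (auto simp: C_def)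
    ultimately show "j \<in> {1..<n}"
      by (cases "j = n") auto
  next
    fix j assume "j \<in> {1..<n}"
    then obtain i m where "i \<in> {1..<n}" "par i = n" "(par ^^ m) j = i"
      using reaches_root_child[OF tree root] by metis
    then show "j \<in> (\<Union>i\<in>C. desc i)"
      using \<open>j \<in> {1..<n}\<close> by (auto simp: C_def desc_def)
  qed
  finally show ?thesis
    by simp
qed

lemma adelta_eq_foldr: "adelta n m = foldr (asigma n) [1..<m]"
  by (simp add: adelta_def foldr_comp_id)

lemma aGarside_eq_foldr: "aGarside n = foldr (asigma n) (garside_word n)"
proof -
  have "foldr (\<lambda>m f. adelta n m \<circ> f) ms id = foldr (asigma n) (concat (map (\<lambda>k. [1..<k]) ms))" for ms
    by (induction ms) (simp_all add: adelta_eq_foldr)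
  then show ?thesis
    by (simp add: aGarside_def garside_word_def)
qed

lemma asigma_Pair:
  "asigma n i (par, e) = (sigma i par, if par (Suc i) = 0 then (e + int (rweight n par i)) mod int n else e)"
  by (simp add: asigma_def)

lemma delta_tail_at: "1 \<le> k \<Longrightarrow> k \<le> n \<Longrightarrow> delta_tail n k par k = cyc n k (par n)"
  by (simp add: delta_tail_def cyc_inv_def exchange_at_n)

lemma delta_tail_root_n:
  fixes par :: "nat \<Rightarrow> nat"
  assumes "par n = 0"
  shows "delta_tail n k par = cyc n k \<circ> par \<circ> cyc_inv n k"
  using assms
  by (simp add: fun_eq_iff delta_tail_def exchange_def)

lemma foldr_asigma_delta_tail:
  assumes tree: "is_tree n par" and k: "1 \<le> k" "k \<le> n" and e: "0 \<le> e" "e < int n"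
  shows "foldr (asigma n) [k..<n] (par, e) = (delta_tail n k par,
     if par n = 0 then (e + (\<Sum>i\<in>{k..<n}. int (rweight n par i))) mod int n else e)"
  using k(2,1)
proof (induction k rule: inc_induct)
  case base
  then show ?case
    using delta_tail_n[OF tree] e by simp
next
  case (step k)
  let ?S = "\<Sum>i\<in>{Suc k..<n}. int (rweight n par i)"
  have root: "delta_tail n (Suc k) par (Suc k) = 0 \<longleftrightarrow> par n = 0"
    using step.hyps relabelling_simps(4)[OF relabelling_cyc[of "Suc k" n]] by (simp add: delta_tail_at)
  have weight: "rweight n (delta_tail n (Suc k) par) k = rweight n par k" if "par n = 0"
    using rweight_relabel[OF relabelling_cyc[of "Suc k" n], of par k] step.hyps
    by (simp add: delta_tail_root_n[of par n, OF that] cyc_def)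
  have "foldr (asigma n) [k..<n] (par, e)
      = asigma n k (delta_tail n (Suc k) par, if par n = 0 then (e + ?S) mod int n else e)"
    using step by (simp add: upt_conv_Cons)
  also have "\<dots> = (delta_tail n k par,
      if par n = 0 then ((e + ?S) mod int n + int (rweight n par k)) mod int n else e)"
    using sigma_delta_tail[OF tree step.prems] step.hyps by (simp add: asigma_Pair root weight)
  also have "((e + ?S) mod int n + int (rweight n par k)) mod int n
      = (e + (\<Sum>i\<in>{k..<n}. int (rweight n par i))) mod int n"
    using step.hyps by (simp add: sum.atLeast_Suc_lessThan mod_add_left_eq mod_add_right_eq ac_simps)
  finally show ?case .
qed

lemma adelta_Pair:
  assumes tree: "is_tree n par" and n: "2 \<le> n" and e: "0 \<le> e" "e < int n"
  shows "adelta n n (par, e) = (rot n par, if par n = 0 then (e - 1) mod int n else e)"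
proof -
  have "adelta n n (par, e) = (rot n par,
      if par n = 0 then (e + (\<Sum>i\<in>{1..<n}. int (rweight n par i))) mod int n else e)"
    using foldr_asigma_delta_tail[OF tree _ _ e, of 1] n
    by (simp add: adelta_eq_foldr delta_tail_1 del: One_nat_def)
  moreover have "(\<Sum>i\<in>{1..<n}. int (rweight n par i)) = int n - 1" if "par n = 0"
    using sum_rweight_root[OF tree that] n by (simp flip: of_nat_sum)
  moreover have "(e + (int n - 1)) mod int n = (e - 1) mod int n"
    by (metis add.commute add_diff_eq mod_add_self1)
  ultimately show ?thesis
    by simp
qed

lemma funpow_left_inverse:
  fixes f g :: "'a \<Rightarrow> 'a"
  shows "(\<And>x. g (f x) = x) \<Longrightarrow> (g ^^ k) ((f ^^ k) x) = x"
  by (induction k arbitrary: x) (simp_all add: funpow_swap1[of g])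

lemma relabelling_funpow:
  assumes "relabelling n \<pi> \<rho>"
  shows "relabelling n (\<pi> ^^ k) (\<rho> ^^ k)"
proof -
  note simps = relabelling_simps[OF assms]
  have "(\<pi> ^^ k) 0 = 0" "(\<pi> ^^ k) x \<le> n \<longleftrightarrow> x \<le> n" for x
    by (induction k) (simp_all add: simps)
  then show ?thesis
    unfolding relabelling_def using funpow_left_inverse[of \<rho> \<pi>] funpow_left_inverse[of \<pi> \<rho>] simps
    by simp
qed

lemma rot_funpow: "(rot n ^^ k) par = (cyc n 1 ^^ k) \<circ> par \<circ> (cyc_inv n 1 ^^ k)"
proof (induction k)
  case (Suc k)
  have "(rot n ^^ Suc k) par = rot n ((rot n ^^ k) par)"
    by simp
  also have "\<dots> = cyc n 1 \<circ> ((cyc n 1 ^^ k) \<circ> par \<circ> (cyc_inv n 1 ^^ k)) \<circ> cyc_inv n 1"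
    by (simp only: rot_def Suc.IH)
  also have "\<dots> = (cyc n 1 ^^ Suc k) \<circ> par \<circ> (cyc_inv n 1 ^^ Suc k)"
    by (rule ext) (simp add: funpow_swap1 del: One_nat_def)
  finally show ?case .
qed simp

lemma cyc_funpow: "x \<in> {1..n} \<Longrightarrow> (cyc n 1 ^^ k) x = (x - 1 + k) mod n + 1"
proof (induction k)
  case 0
  then have "(x - 1) mod n = x - 1"
    by (intro mod_less) auto
  then show ?case
    using 0 by simp
next
  case (Suc k)
  have "(x - 1 + k) mod n < n"
    using Suc.prems by simp
  then have "cyc n 1 ((x - 1 + k) mod n + 1) = Suc (x - 1 + k) mod n + 1"
    unfolding cyc_def mod_Suc[of "x - 1 + k" n] by auto
  then show ?case
    using Suc by simp
qed

lemma cyc_funpow_n: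
  assumes "1 \<le> n"
  shows "cyc n 1 ^^ n = id"
proof
  fix x
  show "(cyc n 1 ^^ n) x = id x"
  proof (cases "x \<in> {1..n}")
    case True
    have "(x - 1 + n) mod n = (x - 1) mod n"
      by (rule mod_add_self2)
    also have "\<dots> = x - 1"
      using True by (intro mod_less) auto
    finally have mod: "(x - 1 + n) mod n = x - 1" .
    have "(cyc n 1 ^^ n) x = (x - 1 + n) mod n + 1"
      by (rule cyc_funpow[OF True])
    also have "\<dots> = x"
      unfolding mod using True by simp
    finally show ?thesis
      by simp
  next
    case False
    then have "(cyc n 1 ^^ k) x = x" for k
      using assms by (induction k) (auto simp: cyc_def)
    then show ?thesis
      by simp
  qed
qed

lemma rot_funpow_n: "1 \<le> n \<Longrightarrow> (rot n ^^ n) par = par"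
  using relabelling_simps(1)[OF relabelling_funpow[OF relabelling_cyc[of 1 n]], of n]
  by (simp add: rot_funpow cyc_funpow_n fun_eq_iff del: One_nat_def)

lemma mod_shift_eq_last:
  fixes r k n :: nat
  assumes "r \<in> {1..n}" "k < n"
  shows "(r - 1 + k) mod n + 1 = n \<longleftrightarrow> k = n - r"
proof (cases "r - 1 + k < n")
  case True
  then show ?thesis
    using assms by auto
next
  case False
  then have "(r - 1 + k) mod n = (r - 1 + k - n) mod n"
    by (simp add: le_mod_geq)
  also have "\<dots> = r - 1 + k - n"
    using assms by (intro mod_less) auto
  finally show ?thesis
    using False assms by auto
qed

lemma rot_funpow_root:
  assumes tree: "is_tree n par" and r: "par r = 0" "r \<in> {1..n}" and k: "k < n"
  shows "(rot n ^^ k) par n = 0 \<longleftrightarrow> k = n - r"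
proof -
  have n: "1 \<le> n"
    using r(2) by simp
  note \<pi> = relabelling_funpow[OF relabelling_cyc[OF order.refl n], of k]
  note simps = relabelling_simps[OF \<pi>]
  have "(cyc_inv n 1 ^^ k) n \<in> {1..n}"
    using n simps(7,9)[of n] by simp
  then have root: "par ((cyc_inv n 1 ^^ k) n) = 0 \<longleftrightarrow> (cyc_inv n 1 ^^ k) n = r"
    using is_tree_root_unique[OF tree r] r(1) by blast
  have "(rot n ^^ k) par n = 0 \<longleftrightarrow> par ((cyc_inv n 1 ^^ k) n) = 0"
    by (simp add: rot_funpow simps del: One_nat_def)
  also have "\<dots> \<longleftrightarrow> n = (cyc n 1 ^^ k) r"
    unfolding root using simps(1,2) by metis
  also have "\<dots> \<longleftrightarrow> k = n - r"
    using mod_shift_eq_last[OF r(2) k] by (auto simp: cyc_funpow[OF r(2)] simp del: One_nat_def)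
  finally show ?thesis .
qed

lemma is_tree_rot_funpow: "is_tree n par \<Longrightarrow> 1 \<le> n \<Longrightarrow> is_tree n ((rot n ^^ k) par)"
  unfolding rot_funpow by (intro is_tree_relabel relabelling_funpow relabelling_cyc) auto

lemma adelta_funpow:
  assumes tree: "is_tree n par" and n: "2 \<le> n" and r: "par r = 0" "r \<in> {1..n}"
    and e: "0 \<le> e" "e < int n" and k: "k \<le> n"
  shows "(adelta n n ^^ k) (par, e) = ((rot n ^^ k) par, if n - r < k then (e - 1) mod int n else e)"
  using k
proof (induction k)
  case (Suc k)
  let ?e = "if n - r < k then (e - 1) mod int n else e"
  have "0 \<le> ?e" "?e < int n"
    using e n by auto
  moreover have "is_tree n ((rot n ^^ k) par)"
    using is_tree_rot_funpow[OF tree] n by simp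
  ultimately have "(adelta n n ^^ Suc k) (par, e)
      = ((rot n ^^ Suc k) par, if (rot n ^^ k) par n = 0 then (?e - 1) mod int n else ?e)"
    using Suc n by (simp add: adelta_Pair)
  also have "(rot n ^^ k) par n = 0 \<longleftrightarrow> k = n - r"
    using rot_funpow_root[OF tree r] Suc.prems by simp
  finally show ?case
    by auto
qed simp

lemma adelta_funpow_n:
  assumes "is_tree n par" "2 \<le> n" "0 \<le> e" "e < int n"
  shows "(adelta n n ^^ n) (par, e) = (par, (e - 1) mod int n)"
proof -
  obtain r where "{j \<in> {1..n}. par j = 0} = {r}"
    using is_tree_root[OF assms(1)] .
  then have r: "par r = 0" "r \<in> {1..n}"
    by auto
  then show ?thesis
    using adelta_funpow[OF assms(1,2) r assms(3,4), of n] rot_funpow_n[of n par] assms(2) by simp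
qed

lemma delta_funpow_eq_rot_funpow: "is_tree n par \<Longrightarrow> 1 \<le> n \<Longrightarrow> (delta n ^^ k) par = (rot n ^^ k) par"
  by (induction k) (simp_all add: delta_eq_rot is_tree_rot_funpow)

lemma Garside_square:
  assumes "is_tree n par" "1 \<le> n"
  shows "(Garside n ^^ 2) par = par"
  using Garside_square_eq_delta_power[OF is_tree_acyclic_parents[OF assms(1)] assms(2)]
    delta_funpow_eq_rot_funpow[OF assms] rot_funpow_n[OF assms(2)] by simp

lemma foldr_asigma_translation:
  "\<exists>c. \<forall>e. 0 \<le> e \<and> e < int n \<longrightarrow> foldr (asigma n) w (par, e) = (foldr sigma w par, (e + c) mod int n)"
proof (induction w)
  case Nil
  show ?case
    by (rule exI[of _ 0]) simp
next
  case (Cons a w)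
  then obtain c where c:
    "\<forall>e. 0 \<le> e \<and> e < int n \<longrightarrow> foldr (asigma n) w (par, e) = (foldr sigma w par, (e + c) mod int n)"
    by blast
  let ?p = "foldr sigma w par"
  let ?d = "if ?p (Suc a) = 0 then int (rweight n ?p a) else 0"
  have "foldr (asigma n) (a # w) (par, e) = (foldr sigma (a # w) par, (e + (c + ?d)) mod int n)"
    if "0 \<le> e \<and> e < int n" for e
    using c that by (simp add: asigma_Pair mod_add_left_eq add.assoc)
  then show ?case
    by blast
qed

lemma aGarside_funpow_2n:
  assumes tree: "is_tree n par" and n: "1 \<le> n" and e: "0 \<le> e" "e < int n"
  shows "(aGarside n ^^ (2 * n)) (par, e) = (par, e)"
proof -
  obtain c where c: "\<forall>e. 0 \<le> e \<and> e < int n \<longrightarrow>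
      foldr (asigma n) (garside_word n @ garside_word n) (par, e)
        = (foldr sigma (garside_word n @ garside_word n) par, (e + c) mod int n)"
    using foldr_asigma_translation by blast
  have "foldr sigma (garside_word n @ garside_word n) par = par"
    using Garside_square[OF tree n] by (simp add: Garside_eq_foldr numeral_2_eq_2)
  then have square: "(aGarside n ^^ 2) (par, e') = (par, (e' + c) mod int n)"
    if "0 \<le> e'" "e' < int n" for e'
    using c that by (simp add: aGarside_eq_foldr numeral_2_eq_2)
  have "(aGarside n ^^ (2 * k)) (par, e) = (par, (e + int k * c) mod int n)" for k
  proof (induction k)
    case (Suc k)
    have "(aGarside n ^^ (2 * Suc k)) (par, e) = (aGarside n ^^ 2) ((aGarside n ^^ (2 * k)) (par, e))"
      by (simp only: mult_Suc_right funpow_add comp_apply)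
    also have "\<dots> = (par, ((e + int k * c) mod int n + c) mod int n)"
      using Suc n by (simp add: square)
    also have "((e + int k * c) mod int n + c) mod int n = (e + int (Suc k) * c) mod int n"
      by (simp add: mod_add_left_eq mod_add_right_eq algebra_simps)
    finally show ?case .
  qed (use e in simp)
  from this[of n] show ?thesis
    using e by simp
qed

theorem theorem1p9:
  fixes n :: nat
  assumes "n \<ge> 2"
  shows "(\<forall>par e. is_tree n par \<and> e \<in> {0..<int n} \<longrightarrow>
            (adelta n n ^^ n) (par, e) = (par, (e - 1) mod int n))
       \<and> (\<forall>par. is_tree n par \<longrightarrow> (Garside n ^^ 2) par = par)
       \<and> (\<forall>par e. is_tree n par \<and> e \<in> {0..<int n} \<longrightarrow>
            (aGarside n ^^ (2 * n)) (par, e) = (par, e))"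
  using assms adelta_funpow_n[of n] Garside_square[of n] aGarside_funpow_2n[of n] by auto

end
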